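(* Let $S=(X,X_0,X_S,U,\rightarrow,Y,H)$ be a metric system with metric $\mathbf{d}$ on $Y$, let $\delta\geq 0$, and let $S_I=(X_I,X_{I0},U,\rightarrow_I)$ be its $\delta$-approximate initial-state estimator. Then for every $(x_0,q_0)\in X_{I0}$ and every finite run $(x_0,q_0)\xrightarrow{u_1}_I (x_1,q_1)\xrightarrow{u_2}_I\cdots\xrightarrow{u_n}_I (x_n,q_n)$ of $S_I$ we have: (i) $x_n\xrightarrow{u_n}x_{n-1}\xrightarrow{u_{n-1}}\cdots\xrightarrow{u_1}x_0$ is a sequence of transitions of $S$; and (ii) $q_n=\{x_0'\in X:\ \exists\, x_0'\xrightarrow{u_n'}x_1'\xrightarrow{u_{n-1}'}\cdots\xrightarrow{u_1'}x_n' \text{ in } S \text{ (for some inputs } u_i'\in U) \text{ with } \max_{i\in\{0,\dots,n\}}\mathbf{d}(H(x_i),H(x_{n-i}'))\leq\delta\}$.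
   Context: A system is a tuple $S=(X,X_0,X_S,U,\rightarrow,Y,H)$ where $X$ is a (possibly infinite) set of states, $X_0\subseteq X$ the initial states, $X_S\subseteq X$ the secret states, $U$ a set of inputs, $\rightarrow\subseteq X\times U\times X$ a transition relation (write $x\xrightarrow{u}x'$ for $(x,u,x')\in\rightarrow$), $Y$ a set of outputs and $H:X\to Y$ an output map. It is metric if $Y$ carries a metric $\mathbf{d}$. For $x\in X$, $u\in U$, $\mathbf{Pre}_u(x)=\{x'': x''\xrightarrow{u}x\}$, and for $q\subseteq X$, $\mathbf{Pre}_u(q)=\bigcup_{x\in q}\mathbf{Pre}_u(x)$. The $\delta$-approximate initial-state estimator of $S$ is $S_I=(X_I,X_{I0},U,\rightarrow_I)$ with $X_{I0}=\{(x,q)\in X\times 2^X: q=\{x'\in X:\mathbf{d}(H(x),H(x'))\leq\delta\}\}$, and for $(x,q),(x',q')\in X\times 2^X$, $u\in U$: $(x,q)\xrightarrow{u}_I(x',q')$ iff $(x',u,x)\in\rightarrow$ and $q'=\bigcup_{\hat u\in U}\mathbf{Pre}_{\hat u}(q)\cap\{x''\in X:\mathbf{d}(H(x'),H(x''))\leq\delta\}$. $X_I\subseteq X\times 2^X$ is the set of states reachable from $X_{I0}$. *)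

theory Defs
  imports "HOL-Analysis.Analysis"
begin

text \<open>A system S = (X, X0, XS, U, T, Y, H). The output set Y is the type 'y;
  it is metric when 'y is of class metric_space (metric d = dist).
  A transition x --u--> x' is (x, u, x') in T.\<close>

definition is_system ::
  "'x set \<Rightarrow> 'x set \<Rightarrow> 'x set \<Rightarrow> 'u set \<Rightarrow> ('x \<times> 'u \<times> 'x) set \<Rightarrow> ('x \<Rightarrow> 'y) \<Rightarrow> bool" where
  "is_system X X0 XS U T H \<longleftrightarrow> X0 \<subseteq> X \<and> XS \<subseteq> X \<and> T \<subseteq> X \<times> U \<times> X"

definition Pre_state :: "('x \<times> 'u \<times> 'x) set \<Rightarrow> 'u \<Rightarrow> 'x \<Rightarrow> 'x set" where
  "Pre_state T u x = {x''. (x'', u, x) \<in> T}"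

definition Pre_set :: "('x \<times> 'u \<times> 'x) set \<Rightarrow> 'u \<Rightarrow> 'x set \<Rightarrow> 'x set" where
  "Pre_set T u q = (\<Union>x\<in>q. Pre_state T u x)"

definition est_init ::
  "'x set \<Rightarrow> ('x \<Rightarrow> 'y::metric_space) \<Rightarrow> real \<Rightarrow> ('x \<times> 'x set) set" where
  "est_init X H \<delta> = {(x, q). x \<in> X \<and> q = {x' \<in> X. dist (H x) (H x') \<le> \<delta>}}"

definition est_trans ::
  "'x set \<Rightarrow> 'u set \<Rightarrow> ('x \<times> 'u \<times> 'x) set \<Rightarrow> ('x \<Rightarrow> 'y::metric_space) \<Rightarrow> real
   \<Rightarrow> ('x \<times> 'x set) \<Rightarrow> 'u \<Rightarrow> ('x \<times> 'x set) \<Rightarrow> bool" where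
  "est_trans X U T H \<delta> s u s' \<longleftrightarrow>
     (case s of (x, q) \<Rightarrow> case s' of (x', q') \<Rightarrow>
        x \<in> X \<and> q \<subseteq> X \<and> x' \<in> X \<and> q' \<subseteq> X \<and>
        (x', u, x) \<in> T \<and>
        q' = (\<Union>uh\<in>U. Pre_set T uh q) \<inter> {x'' \<in> X. dist (H x') (H x'') \<le> \<delta>})"

inductive_set est_reach ::
  "'x set \<Rightarrow> 'u set \<Rightarrow> ('x \<times> 'u \<times> 'x) set \<Rightarrow> ('x \<Rightarrow> 'y::metric_space) \<Rightarrow> real
   \<Rightarrow> ('x \<times> 'x set) set" for X U T H \<delta> where
  init: "s \<in> est_init X H \<delta> \<Longrightarrow> s \<in> est_reach X U T H \<delta>"
| step: "s \<in> est_reach X U T H \<delta> \<Longrightarrow> u \<in> U \<Longrightarrow> est_trans X U T H \<delta> s u s'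
         \<Longrightarrow> s' \<in> est_reach X U T H \<delta>"

end

theory Submission
  imports Defs
begin

text \<open>The estimator update forgets everything about the run except the current output:
  q' consists of the one-step predecessors of q whose output is within \<delta> of H x'.
  The set of origins of backward paths that stay \<delta>-close to the observed outputs
  satisfies the same recursion, so by induction along the run it coincides with q.\<close>

definition consistent_origins ::
  "'x set \<Rightarrow> 'u set \<Rightarrow> ('x \<times> 'u \<times> 'x) set \<Rightarrow> ('x \<Rightarrow> 'y::metric_space) \<Rightarrow> real
   \<Rightarrow> (nat \<Rightarrow> 'x) \<Rightarrow> nat \<Rightarrow> 'x set" where
  "consistent_origins X U T H \<delta> xs k = {x0' \<in> X. \<exists>xs' :: nat \<Rightarrow> 'x. \<exists>us' :: nat \<Rightarrow> 'u.
       xs' 0 = x0'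
     \<and> (\<forall>i<k. us' (k - i) \<in> U \<and> (xs' i, us' (k - i), xs' (Suc i)) \<in> T)
     \<and> (\<forall>i\<le>k. dist (H (xs i)) (H (xs' (k - i))) \<le> \<delta>)}"

lemma consistent_origins_0:
  "consistent_origins X U T H \<delta> xs 0 = {x \<in> X. dist (H (xs 0)) (H x) \<le> \<delta>}"
  by (auto simp: consistent_origins_def)

lemma consistent_origins_Suc:
  assumes T: "T \<subseteq> X \<times> U \<times> X"
  shows "consistent_origins X U T H \<delta> xs (Suc k) =
    (\<Union>u\<in>U. Pre_set T u (consistent_origins X U T H \<delta> xs k))
      \<inter> {x \<in> X. dist (H (xs (Suc k))) (H x) \<le> \<delta>}"
    (is "?O (Suc k) = ?R")
proof (intro set_eqI iffI)
  fix y assume "y \<in> ?O (Suc k)"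
  then obtain zs vs where y: "y \<in> X" "zs 0 = y"
    and path: "\<forall>i<Suc k. vs (Suc k - i) \<in> U \<and> (zs i, vs (Suc k - i), zs (Suc i)) \<in> T"
    and close: "\<forall>i\<le>Suc k. dist (H (xs i)) (H (zs (Suc k - i))) \<le> \<delta>"
    by (auto simp: consistent_origins_def)
  have first: "vs (Suc k) \<in> U" "(y, vs (Suc k), zs 1) \<in> T"
    using path[rule_format, of 0] y by auto
  have "zs 1 \<in> ?O k"
    unfolding consistent_origins_def
  proof (intro CollectI conjI exI[of _ "\<lambda>j. zs (Suc j)"] exI[of _ vs])
    show "zs 1 \<in> X" using first T by auto
    show "\<forall>i<k. vs (k - i) \<in> U \<and> (zs (Suc i), vs (k - i), zs (Suc (Suc i))) \<in> T"
      using path by (auto dest: spec[of _ "Suc _"])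
    show "\<forall>i\<le>k. dist (H (xs i)) (H (zs (Suc (k - i)))) \<le> \<delta>"
      using close by (metis Suc_diff_le le_SucI)
  qed simp
  moreover have "dist (H (xs (Suc k))) (H y) \<le> \<delta>"
    using close[rule_format, of "Suc k"] y by simp
  ultimately show "y \<in> ?R"
    using first y by (auto simp: Pre_set_def Pre_state_def)
next
  fix y assume "y \<in> ?R"
  then obtain u z where y: "y \<in> X" "u \<in> U" "(y, u, z) \<in> T" "z \<in> ?O k"
    and close_y: "dist (H (xs (Suc k))) (H y) \<le> \<delta>"
    by (auto simp: Pre_set_def Pre_state_def)
  then obtain zs vs where z: "zs 0 = z"
    and path: "\<forall>i<k. vs (k - i) \<in> U \<and> (zs i, vs (k - i), zs (Suc i)) \<in> T"
    and close: "\<forall>i\<le>k. dist (H (xs i)) (H (zs (k - i))) \<le> \<delta>"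
    by (auto simp: consistent_origins_def)
  show "y \<in> ?O (Suc k)"
    unfolding consistent_origins_def
  proof (intro CollectI conjI exI[of _ "case_nat y zs"] exI[of _ "vs(Suc k := u)"])
    show "\<forall>i<Suc k. (vs(Suc k := u)) (Suc k - i) \<in> U
        \<and> (case_nat y zs i, (vs(Suc k := u)) (Suc k - i), case_nat y zs (Suc i)) \<in> T"
      using path y z by (auto simp: less_Suc_eq_0_disj)
    show "\<forall>i\<le>Suc k. dist (H (xs i)) (H (case_nat y zs (Suc k - i))) \<le> \<delta>"
      using close close_y by (auto simp: le_Suc_eq Suc_diff_le)
  qed (use y in simp_all)
qed

lemma est_run_consistent_origins:
  assumes T: "T \<subseteq> X \<times> U \<times> X"
    and start: "(xs 0, qs 0) \<in> est_init X H \<delta>"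
    and run: "\<forall>i<n. est_trans X U T H \<delta> (xs i, qs i) (us (Suc i)) (xs (Suc i), qs (Suc i))"
    and "k \<le> n"
  shows "qs k = consistent_origins X U T H \<delta> xs k"
  using \<open>k \<le> n\<close>
proof (induction k)
  case 0
  then show ?case using start by (simp add: est_init_def consistent_origins_0)
next
  case (Suc k)
  have "est_trans X U T H \<delta> (xs k, qs k) (us (Suc k)) (xs (Suc k), qs (Suc k))"
    using run Suc.prems by (simp add: Suc_le_lessD)
  with Suc show ?case
    by (simp add: est_trans_def consistent_origins_Suc[OF T])
qed

theorem mainTheorem1:
  fixes X X0 XS :: "'x set" and U :: "'u set" and T :: "('x \<times> 'u \<times> 'x) set"
    and H :: "'x \<Rightarrow> 'y::metric_space" and \<delta> :: real
    and n :: nat and xs :: "nat \<Rightarrow> 'x" and qs :: "nat \<Rightarrow> 'x set" and us :: "nat \<Rightarrow> 'u"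
  assumes sys: "is_system X X0 XS U T H"
    and delta: "\<delta> \<ge> 0"
    and start: "(xs 0, qs 0) \<in> est_init X H \<delta>"
    and run: "\<forall>i<n. est_trans X U T H \<delta> (xs i, qs i) (us (Suc i)) (xs (Suc i), qs (Suc i))"
  shows "(\<forall>i<n. (xs (Suc i), us (Suc i), xs i) \<in> T)
       \<and> qs n = {x0' \<in> X. \<exists>xs' :: nat \<Rightarrow> 'x. \<exists>us' :: nat \<Rightarrow> 'u.
                    xs' 0 = x0'
                  \<and> (\<forall>i<n. us' (n - i) \<in> U \<and> (xs' i, us' (n - i), xs' (Suc i)) \<in> T)
                  \<and> (\<forall>i\<le>n. dist (H (xs i)) (H (xs' (n - i))) \<le> \<delta>)}"
proof
  show "\<forall>i<n. (xs (Suc i), us (Suc i), xs i) \<in> T"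
    using run by (auto simp: est_trans_def)
  have "T \<subseteq> X \<times> U \<times> X" using sys by (simp add: is_system_def)
  from est_run_consistent_origins[OF this start run order.refl]
  show "qs n = {x0' \<in> X. \<exists>xs' :: nat \<Rightarrow> 'x. \<exists>us' :: nat \<Rightarrow> 'u.
                    xs' 0 = x0'
                  \<and> (\<forall>i<n. us' (n - i) \<in> U \<and> (xs' i, us' (n - i), xs' (Suc i)) \<in> T)
                  \<and> (\<forall>i\<le>n. dist (H (xs i)) (H (xs' (n - i))) \<le> \<delta>)}"
    by (simp add: consistent_origins_def)
qed

end
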